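(* Let $t:[0,1]\to[0,\infty]$ and $s:[0,\infty]\to[0,1]$ be continuous and increasing functions such that the function $G_{t,s}:[0,1]^2\to[0,1]$, $G_{t,s}(x,y)=s(t(x)+t(y))$, is a grouping function. Then: (1) $t(x)=\infty$ if and only if $x=1$; (2) $s(x)=1$ if and only if $x=\infty$.
   Context: "Increasing" means non-decreasing. Arithmetic in $[0,\infty]$ uses $c+\infty=\infty$; continuity on $[0,\infty]$ refers to the usual topology of the extended half-line. A grouping function is a map $G:[0,1]^2\to[0,1]$ that is (G1) commutative, (G2) $G(x,y)=0$ iff $x=y=0$, (G3) $G(x,y)=1$ iff $x=1$ or $y=1$, (G4) increasing in each variable, (G5) continuous. *)

theory Defs
  imports "HOL-Analysis.Analysis" "HOL-Library.Extended_Nonnegative_Real"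
begin

text \<open>Grouping function on the unit square [0,1]^2, conditions (G1)-(G5);
  the function is only constrained on the square, where it must take values in [0,1].\<close>
definition grouping_function :: "(real \<Rightarrow> real \<Rightarrow> real) \<Rightarrow> bool" where
  "grouping_function G \<longleftrightarrow>
     (\<forall>x\<in>{0..1}. \<forall>y\<in>{0..1}. G x y \<in> {0..1}) \<and>
     (\<forall>x\<in>{0..1}. \<forall>y\<in>{0..1}. G x y = G y x) \<and>
     (\<forall>x\<in>{0..1}. \<forall>y\<in>{0..1}. G x y = 0 \<longleftrightarrow> x = 0 \<and> y = 0) \<and>
     (\<forall>x\<in>{0..1}. \<forall>y\<in>{0..1}. G x y = 1 \<longleftrightarrow> x = 1 \<or> y = 1) \<and>
     (\<forall>x\<in>{0..1}. \<forall>x'\<in>{0..1}. \<forall>y\<in>{0..1}. x \<le> x' \<longrightarrow> G x y \<le> G x' y) \<and>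
     (\<forall>x\<in>{0..1}. \<forall>y\<in>{0..1}. \<forall>y'\<in>{0..1}. y \<le> y' \<longrightarrow> G x y \<le> G x y') \<and>
     continuous_on ({0..1} \<times> {0..1}) (\<lambda>(x, y). G x y)"

end

theory Submission
  imports Defs
begin

text \<open>Write \<open>G x y = s (t x + t y)\<close>. If \<open>t 1\<close> were finite, then \<open>t 0 < t 1\<close> (as \<open>G 0 0 = 0 \<noteq> 1 = G 1 0\<close>)
  and by the intermediate value theorem some \<open>x < 1\<close> satisfies \<open>2 t x = t 0 + t 1\<close>, so that
  \<open>G x x = G 1 0 = 1\<close>, contradicting (G3). Hence \<open>t 1 = \<infinity>\<close> and \<open>s \<infinity> = G 1 0 = 1\<close>, and the same
  diagonal argument shows that \<open>t x = \<infinity>\<close> forces \<open>x = 1\<close>. A finite \<open>z\<close> either lies below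
  \<open>2 t 0\<close>, so \<open>s z \<le> G 0 0 = 0\<close>, or equals \<open>t x\<close> for some \<open>x < 1\<close>, so \<open>s z \<le> G x x < 1\<close>.\<close>

lemma grouping_function_zero_zero: "grouping_function G \<Longrightarrow> G 0 0 = 0"
  unfolding grouping_function_def by simp

lemma grouping_function_one_left: "grouping_function G \<Longrightarrow> y \<in> {0..1} \<Longrightarrow> G 1 y = 1"
  unfolding grouping_function_def by simp

lemma grouping_function_diag_neq_one:
  "grouping_function G \<Longrightarrow> x \<in> {0..1} \<Longrightarrow> x \<noteq> 1 \<Longrightarrow> G x x \<noteq> 1"
  unfolding grouping_function_def by simp

lemma ennreal_midpoint:
  fixes a b :: ennreal
  assumes "a < b" "b < \<infinity>"
  shows "\<exists>m. a < m \<and> m < b \<and> m + m = a + b"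
proof -
  obtain x y where xy: "a = ennreal x" "b = ennreal y" "0 \<le> x" "x < y"
    using assms by (cases a; cases b) (auto simp: ennreal_less_iff)
  show ?thesis
  proof (intro exI conjI)
    show "a < ennreal ((x + y) / 2)" "ennreal ((x + y) / 2) < b"
      using xy by (auto simp: ennreal_less_iff)
    show "ennreal ((x + y) / 2) + ennreal ((x + y) / 2) = a + b"
      using xy by (simp flip: ennreal_plus)
  qed
qed

lemma additive_grouping_inner_one_eq_infinity:
  fixes t :: "real \<Rightarrow> ennreal" and s :: "ennreal \<Rightarrow> real"
  assumes t_cont: "continuous_on {0..1} t"
    and t_mono: "mono_on {0..1} t"
    and G: "grouping_function (\<lambda>x y. s (t x + t y))"
  shows "t 1 = \<infinity>"
proof (rule ccontr)
  assume "t 1 \<noteq> \<infinity>"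
  have G00: "s (t 0 + t 0) = 0" and G10: "s (t 1 + t 0) = 1"
    using grouping_function_zero_zero[OF G] grouping_function_one_left[OF G, of 0] by simp_all
  have "t 0 \<noteq> t 1"
    using G00 G10 by auto
  moreover have "t 0 \<le> t 1"
    using t_mono by (simp add: mono_on_def)
  ultimately have "t 0 < t 1"
    by simp
  moreover have "t 1 < \<infinity>"
    using \<open>t 1 \<noteq> \<infinity>\<close> by (simp add: top.not_eq_extremum)
  ultimately obtain m where m: "t 0 < m" "m < t 1" "m + m = t 0 + t 1"
    using ennreal_midpoint by blast
  then obtain x where x: "0 \<le> x" "x \<le> 1" "t x = m"
    using IVT'[of t 0 m 1] t_cont by (auto dest: less_imp_le)
  have "x \<noteq> 1"
    using x m by auto
  moreover have "s (t x + t x) = 1"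
    using x m G10 by (simp add: add.commute)
  ultimately show False
    using grouping_function_diag_neq_one[OF G, of x] x by simp
qed

lemma additive_grouping_inner_eq_infinity_iff:
  fixes t :: "real \<Rightarrow> ennreal" and s :: "ennreal \<Rightarrow> real"
  assumes t_cont: "continuous_on {0..1} t"
    and t_mono: "mono_on {0..1} t"
    and G: "grouping_function (\<lambda>x y. s (t x + t y))"
    and x: "x \<in> {0..1}"
  shows "t x = \<infinity> \<longleftrightarrow> x = 1"
proof
  have t1: "t 1 = \<infinity>"
    using additive_grouping_inner_one_eq_infinity[OF t_cont t_mono G] .
  then show "t x = \<infinity>" if "x = 1"
    using that by simp
  assume "t x = \<infinity>"
  then have "s (t x + t x) = s (t 1 + t 0)"
    using t1 by simp
  then show "x = 1"
    using grouping_function_diag_neq_one[OF G x] grouping_function_one_left[OF G, of 0] by auto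
qed

lemma additive_grouping_outer_eq_one_iff:
  fixes t :: "real \<Rightarrow> ennreal" and s :: "ennreal \<Rightarrow> real"
  assumes t_cont: "continuous_on {0..1} t"
    and t_mono: "mono_on {0..1} t"
    and s_mono: "mono s"
    and s_range: "\<forall>z. s z \<in> {0..1}"
    and G: "grouping_function (\<lambda>x y. s (t x + t y))"
  shows "s z = 1 \<longleftrightarrow> z = \<infinity>"
proof
  have t1: "t 1 = \<infinity>"
    using additive_grouping_inner_one_eq_infinity[OF t_cont t_mono G] .
  show "s z = 1" if "z = \<infinity>"
    using that t1 grouping_function_one_left[OF G, of 0] by simp
  assume sz: "s z = 1"
  show "z = \<infinity>"
  proof (rule ccontr)
    assume "z \<noteq> \<infinity>"
    show False
    proof (cases "z \<le> t 0")
      case True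
      then have "z \<le> t 0 + t 0"
        by (simp add: add_increasing2)
      then have "s z \<le> s (t 0 + t 0)"
        using s_mono by (simp add: monoD)
      then show False
        using sz grouping_function_zero_zero[OF G] by simp
    next
      case False
      then have "t 0 \<le> z" "z \<le> t 1"
        using t1 by simp_all
      then obtain x where x: "0 \<le> x" "x \<le> 1" "t x = z"
        using IVT'[of t 0 z 1] t_cont by auto
      have "x \<noteq> 1"
        using x t1 \<open>z \<noteq> \<infinity>\<close> by auto
      have "s z \<le> s (t x + t x)"
        using x s_mono by (simp add: monoD)
      moreover have "s (t x + t x) \<le> 1"
        using s_range by simp
      ultimately have "s (t x + t x) = 1"
        using sz by simp
      then show False
        using grouping_function_diag_neq_one[OF G, of x] x \<open>x \<noteq> 1\<close> by simp
    qed
  qed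
qed

theorem theorem6p1:
  fixes t :: "real \<Rightarrow> ennreal" and s :: "ennreal \<Rightarrow> real"
  assumes t_cont: "continuous_on {0..1} t"
    and t_mono: "mono_on {0..1} t"
    and s_cont: "continuous_on UNIV s"
    and s_mono: "mono s"
    and s_range: "\<forall>z. s z \<in> {0..1}"
    and G: "grouping_function (\<lambda>x y. s (t x + t y))"
  shows "(\<forall>x\<in>{0..1}. t x = \<infinity> \<longleftrightarrow> x = 1) \<and> (\<forall>z. s z = 1 \<longleftrightarrow> z = \<infinity>)"
  using additive_grouping_inner_eq_infinity_iff[OF t_cont t_mono G]
    additive_grouping_outer_eq_one_iff[OF t_cont t_mono s_mono s_range G]
  by blast

end
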